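(* Let a quantum system be given, i.e. a finite-dimensional complex Hilbert space $\mathcal{H}$ together with sets $\mathcal{P},\mathcal{M},\mathcal{T}$ of preparations, measurements and transformations, where every density operator on $\mathcal{H}$ represents some preparation and every self-adjoint operator on $\mathcal{H}$ represents some measurement. Then every ontic model for this quantum system that is $\psi$-complete is also $\psi$-ontic.
   Context: A quantum system consists of a finite-dimensional Hilbert space $\mathcal{H}$ and sets $\mathcal{P}$ (preparations), $\mathcal{M}$ (measurements), $\mathcal{T}$ (transformations), together with surjective (possibly many-to-one) maps assigning to each $P\in\mathcal{P}$ a density operator $\rho$ on $\mathcal{H}$, to each $M\in\mathcal{M}$ a self-adjoint operator $A$ on $\mathcal{H}$ (a projection-valued measurement), and to each $T\in\mathcal{T}$ a unitary $U$ on $\mathcal{H}$; we write $P_\rho, M_A, T_U$. For an eigenvalue $a$ of $A$, $[a]_A$ denotes the projection onto the corresponding eigenspace; the quantum probability of outcome $a$ is $\mathrm{Tr}(U\rho U^*[a]_A)$. For a unit vector $\psi$, $[\psi]$ is the projection onto its span; a pure state is $\rho=[\psi]$. An ontic model for the system consists of a measurable space $(\Lambda,\Sigma)$; for each $M\in\mathcal{M}$ a Markov kernel $p_M$ (response function) assigning to each $\lambda\in\Lambda$ a probability distribution $p_M(\cdot|\lambda)$ on the eigenvalues of the operator representing $M$; for each $P\in\mathcal{P}$ a probability measure $\mu_P$ on $(\Lambda,\Sigma)$; for each $T\in\mathcal{T}$ a Markov kernel $\gamma_T$ from $(\Lambda,\Sigma)$ to itself; such that for all $P_\rho,M_A,T_U$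 and eigenvalues $a$: $\int p_{M_A}(a|\lambda)\,d\mu_{P_\rho}(\lambda)=\mathrm{Tr}(\rho[a]_A)$ and $\iint p_{M_A}(a|\lambda)\gamma_{T_U}(d\lambda|\tilde\lambda)\,d\mu_{P_\rho}(\tilde\lambda)=\mathrm{Tr}(U\rho U^*[a]_A)$. The ontic model is trivial with respect to $\mathcal{M}'\subset\mathcal{M}$ and $\mathcal{P}'\subset\mathcal{P}$ if for every $P_\rho\in\mathcal{P}'$, every $M_A\in\mathcal{M}'$ and every eigenvalue $a$ of $A$, $\int|p_{M_A}(a|\lambda)-\mathrm{Tr}(\rho[a]_A)|\,d\mu_{P_\rho}(\lambda)=0$. It is $\psi$-complete if it is trivial with respect to all of $\mathcal{M}$ and $\mathcal{P}$. The ontic model is $\psi$-ontic if for any two preparations $P_1,P_2$ represented by distinct pure quantum states, $\sup_{\Delta\in\Sigma}|\mu_{P_1}(\Delta)-\mu_{P_2}(\Delta)|=1$. *)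

theory Defs
  imports "HOL-Analysis.Analysis" "HOL-Probability.Probability"
begin

text \<open>The Hilbert space is complex^'n (finite-dimensional, 'n a finite index type);
 operators are complex matrices complex^'n^'n acting via *v.\<close>

type_synonym 'n cmat = "complex^'n^'n"

definition cinner :: "complex^('n::finite) \<Rightarrow> complex^'n \<Rightarrow> complex" where
  "cinner v w = (\<Sum>i\<in>UNIV. cnj (v $ i) * w $ i)"

definition adj :: "('n::finite) cmat \<Rightarrow> ('n::finite) cmat" where
  "adj M = (\<chi> i j. cnj (M $ j $ i))"

definition self_adjoint :: "('n::finite) cmat \<Rightarrow> bool" where
  "self_adjoint M \<longleftrightarrow> adj M = M"

definition unitary_op :: "('n::finite) cmat \<Rightarrow> bool" where
  "unitary_op U \<longleftrightarrow> U ** adj U = mat 1 \<and> adj U ** U = mat 1"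

definition positive_op :: "('n::finite) cmat \<Rightarrow> bool" where
  "positive_op M \<longleftrightarrow> (\<forall>v. Im (cinner v (M *v v)) = 0 \<and> Re (cinner v (M *v v)) \<ge> 0)"

definition density_op :: "('n::finite) cmat \<Rightarrow> bool" where
  "density_op \<rho> \<longleftrightarrow> self_adjoint \<rho> \<and> positive_op \<rho> \<and> trace \<rho> = 1"

definition proj_onto :: "(complex^('n::finite)) set \<Rightarrow> ('n::finite) cmat" where
  "proj_onto S = (THE P. P ** P = P \<and> adj P = P \<and> range (\<lambda>v. P *v v) = S)"

definition eigenvalues :: "('n::finite) cmat \<Rightarrow> complex set" where
  "eigenvalues A = {a. \<exists>v. v \<noteq> 0 \<and> A *v v = a *s v}"

definition eigproj :: "('n::finite) cmat \<Rightarrow> complex \<Rightarrow> ('n::finite) cmat" where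
  "eigproj A a = proj_onto {v. A *v v = a *s v}"

definition ket_proj :: "complex^('n::finite) \<Rightarrow> ('n::finite) cmat" where
  "ket_proj \<psi> = proj_onto {c *s \<psi> | c. True}"

definition pure_state :: "('n::finite) cmat \<Rightarrow> bool" where
  "pure_state \<rho> \<longleftrightarrow> (\<exists>\<psi>. cinner \<psi> \<psi> = 1 \<and> \<rho> = ket_proj \<psi>)"

definition quantum_system ::
  "'p set \<Rightarrow> 'm set \<Rightarrow> 't set \<Rightarrow> ('p \<Rightarrow> ('n::finite) cmat) \<Rightarrow> ('m \<Rightarrow> ('n::finite) cmat) \<Rightarrow> ('t \<Rightarrow> ('n::finite) cmat) \<Rightarrow> bool" where
  "quantum_system Ps Ms Ts rho A U \<longleftrightarrow>
     (\<forall>P\<in>Ps. density_op (rho P)) \<and> (\<forall>M\<in>Ms. self_adjoint (A M)) \<and> (\<forall>T\<in>Ts. unitary_op (U T))"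

text \<open>Ontic model on the measurable space L (= (Lambda, Sigma)).
 p M a l = p_M(a|l); mu P = mu_P; gamma T l = gamma_T(.|l).\<close>
definition ontic_model ::
  "'l measure \<Rightarrow> 'p set \<Rightarrow> 'm set \<Rightarrow> 't set \<Rightarrow> ('p \<Rightarrow> ('n::finite) cmat) \<Rightarrow> ('m \<Rightarrow> ('n::finite) cmat) \<Rightarrow> ('t \<Rightarrow> ('n::finite) cmat)
   \<Rightarrow> ('m \<Rightarrow> complex \<Rightarrow> 'l \<Rightarrow> real) \<Rightarrow> ('p \<Rightarrow> 'l measure) \<Rightarrow> ('t \<Rightarrow> 'l \<Rightarrow> 'l measure) \<Rightarrow> bool" where
  "ontic_model L Ps Ms Ts rho A U p mu gamma \<longleftrightarrow>
     (\<forall>M\<in>Ms. \<forall>a\<in>eigenvalues (A M). p M a \<in> borel_measurable L) \<and>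
     (\<forall>M\<in>Ms. \<forall>a\<in>eigenvalues (A M). \<forall>l\<in>space L. 0 \<le> p M a l) \<and>
     (\<forall>M\<in>Ms. \<forall>l\<in>space L. (\<Sum>a\<in>eigenvalues (A M). p M a l) = 1) \<and>
     (\<forall>P\<in>Ps. prob_space (mu P) \<and> sets (mu P) = sets L) \<and>
     (\<forall>T\<in>Ts. gamma T \<in> measurable L (prob_algebra L)) \<and>
     (\<forall>P\<in>Ps. \<forall>M\<in>Ms. \<forall>a\<in>eigenvalues (A M).
        complex_of_real (\<integral>l. p M a l \<partial>mu P) = trace (rho P ** eigproj (A M) a)) \<and>
     (\<forall>P\<in>Ps. \<forall>M\<in>Ms. \<forall>T\<in>Ts. \<forall>a\<in>eigenvalues (A M).
        complex_of_real (\<integral>l'. (\<integral>l. p M a l \<partial>gamma T l') \<partial>mu P)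
          = trace (U T ** rho P ** adj (U T) ** eigproj (A M) a))"

definition trivial_wrt ::
  "'m set \<Rightarrow> 'p set \<Rightarrow> ('p \<Rightarrow> ('n::finite) cmat) \<Rightarrow> ('m \<Rightarrow> ('n::finite) cmat)
   \<Rightarrow> ('m \<Rightarrow> complex \<Rightarrow> 'l \<Rightarrow> real) \<Rightarrow> ('p \<Rightarrow> 'l measure) \<Rightarrow> bool" where
  "trivial_wrt Ms' Ps' rho A p mu \<longleftrightarrow>
     (\<forall>P\<in>Ps'. \<forall>M\<in>Ms'. \<forall>a\<in>eigenvalues (A M).
        (\<integral>l. cmod (complex_of_real (p M a l) - trace (rho P ** eigproj (A M) a)) \<partial>mu P) = 0)"

definition psi_complete where
  "psi_complete Ps Ms rho A p mu \<longleftrightarrow> trivial_wrt Ms Ps rho A p mu"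

definition psi_ontic ::
  "'l measure \<Rightarrow> 'p set \<Rightarrow> ('p \<Rightarrow> ('n::finite) cmat) \<Rightarrow> ('p \<Rightarrow> 'l measure) \<Rightarrow> bool" where
  "psi_ontic L Ps rho mu \<longleftrightarrow>
     (\<forall>P1\<in>Ps. \<forall>P2\<in>Ps. pure_state (rho P1) \<and> pure_state (rho P2) \<and> rho P1 \<noteq> rho P2 \<longrightarrow>
        (SUP D\<in>sets L. \<bar>measure (mu P1) D - measure (mu P2) D\<bar>) = 1)"

end

theory Submission
  imports Defs
begin

text \<open>The projection \<open>[\<psi>]\<close> of a pure state is self-adjoint, so it is a measurement, and the
  eigenprojection of its eigenvalue 1 is \<open>[\<psi>]\<close> itself. In a \<open>\<psi>\<close>-complete model the response
  \<open>p(1|\<lambda>)\<close> of this measurement equals \<open>Tr(\<rho>[\<psi>])\<close> almost surely under \<open>\<mu>\<^sub>P\<close>. This is 1 for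
  \<open>\<rho> = [\<psi>]\<close> and differs from 1 for any other pure state \<open>\<rho> = [\<phi>]\<close>, since
  \<open>Tr(([\<psi>] - [\<phi>])\<^sup>2) = 2 - 2 Tr([\<phi>][\<psi>])\<close> vanishes only if \<open>[\<psi>] = [\<phi>]\<close>. Hence the event
  \<open>{\<lambda>. p(1|\<lambda>) = 1}\<close> has probability 1 under one preparation and 0 under the other.\<close>

lemma adj_matrix_mult: "adj (X ** Y) = adj Y ** adj (X :: ('n::finite) cmat)"
  by (simp add: adj_def matrix_matrix_mult_def vec_eq_iff mult.commute)

lemma adj_diff: "adj (X - Y) = adj X - adj (Y :: ('n::finite) cmat)"
  by (simp add: adj_def vec_eq_iff)

lemma matrix_mult_eq_if_range_subset:
  fixes P X :: "('n::finite) cmat"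
  assumes "P ** P = P" and "range ((*v) X) \<subseteq> range ((*v) P)"
  shows "P ** X = X"
proof -
  have "P *v (X *v v) = X *v v" for v
  proof -
    obtain w where "X *v v = P *v w" using assms(2) by blast
    then show ?thesis using assms(1) by (simp add: matrix_vector_mul_assoc)
  qed
  then show ?thesis by (simp add: matrix_eq matrix_vector_mul_assoc)
qed

lemma orth_proj_eq_if_range_eq:
  fixes P Q :: "('n::finite) cmat"
  assumes "P ** P = P" "adj P = P" "Q ** Q = Q" "adj Q = Q"
    and "range ((*v) P) = range ((*v) Q)"
  shows "P = Q"
proof -
  have "Q ** P = P" "P ** Q = Q"
    using matrix_mult_eq_if_range_subset[of Q P] matrix_mult_eq_if_range_subset[of P Q] assms
    by simp_all
  then have "P = adj (Q ** P)" "Q = P ** Q" using assms by simp_all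
  then show ?thesis using assms by (simp add: adj_matrix_mult)
qed

lemma proj_onto_range:
  fixes P :: "('n::finite) cmat"
  assumes "P ** P = P" "adj P = P"
  shows "proj_onto (range ((*v) P)) = P"
  unfolding proj_onto_def
  by (rule the_equality) (use assms orth_proj_eq_if_range_eq in auto)

lemma eigproj_1_proj:
  fixes P :: "('n::finite) cmat"
  assumes "P ** P = P" "adj P = P"
  shows "eigproj P 1 = P"
proof -
  have "{v. P *v v = 1 *s v} = range ((*v) P)"
    using assms(1) by (auto simp: matrix_vector_mul_assoc) (metis rangeI)
  then show ?thesis unfolding eigproj_def using proj_onto_range[OF assms] by simp
qed

lemma self_adjoint_eq_0_if_trace_square_eq_0:
  fixes X :: "('n::finite) cmat"
  assumes "adj X = X" "trace (X ** X) = 0"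
  shows "X = 0"
proof -
  have sym: "X $ k $ i = cnj (X $ i $ k)" for i k
    using arg_cong[OF assms(1), of "\<lambda>M. M $ k $ i"] by (simp add: adj_def)
  have "trace (X ** X) = (\<Sum>i\<in>UNIV. \<Sum>k\<in>UNIV. X$i$k * cnj (X$i$k))"
    unfolding trace_def matrix_matrix_mult_def by (simp, intro sum.cong refl) (metis sym)
  also have "\<dots> = of_real (\<Sum>i\<in>UNIV. \<Sum>k\<in>UNIV. (cmod (X$i$k))\<^sup>2)"
    by (simp only: of_real_sum complex_norm_square)
  finally have "(\<Sum>i\<in>UNIV. \<Sum>k\<in>UNIV. (cmod (X$i$k))\<^sup>2) = 0"
    using assms(2) of_real_eq_0_iff by metis
  then have "X $ i $ k = 0" for i k
    by (simp add: sum_nonneg_eq_0_iff sum_nonneg)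
  then show ?thesis by (simp add: vec_eq_iff)
qed

lemma proj_eq_if_trace_mult_eq_1:
  fixes P Q :: "('n::finite) cmat"
  assumes "P ** P = P" "adj P = P" "Q ** Q = Q" "adj Q = Q" "trace P = 1" "trace Q = 1"
    and "trace (Q ** P) = 1"
  shows "P = Q"
proof -
  have "(P - Q) ** (P - Q) = P ** P - P ** Q - Q ** P + Q ** Q"
    by (simp add: matrix_matrix_mult_def vec_eq_iff sum_subtractf sum.distrib algebra_simps)
  then have "trace ((P - Q) ** (P - Q)) = 0"
    using assms by (simp add: trace_add trace_sub trace_mul_sym[of P Q])
  then show ?thesis
    using self_adjoint_eq_0_if_trace_square_eq_0[of "P - Q"] assms by (simp add: adj_diff)
qed

text \<open>The explicit matrix \<open>|\<psi>\<rangle>\<langle>\<psi>|\<close> behind the implicitly defined \<^const>\<open>ket_proj\<close>.\<close>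
definition ket_bra :: "complex^('n::finite) \<Rightarrow> 'n cmat" where
  "ket_bra \<psi> = (\<chi> i j. \<psi>$i * cnj (\<psi>$j))"

lemma ket_bra_mult_vec: "ket_bra \<psi> *v v = cinner \<psi> v *s \<psi>"
  by (simp add: ket_bra_def matrix_vector_mult_def cinner_def vec_eq_iff sum_distrib_left mult_ac)

lemma cinner_scale_right: "cinner \<psi> (c *s v) = c * cinner \<psi> v"
  by (simp add: cinner_def sum_distrib_left mult_ac)

lemma ket_bra_idem: "cinner \<psi> \<psi> = 1 \<Longrightarrow> ket_bra \<psi> ** ket_bra \<psi> = ket_bra \<psi>"
  by (simp add: matrix_eq flip: matrix_vector_mul_assoc)
     (simp add: ket_bra_mult_vec cinner_scale_right)

lemma adj_ket_bra: "adj (ket_bra \<psi>) = ket_bra \<psi>"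
  by (simp add: ket_bra_def adj_def vec_eq_iff mult.commute)

lemma trace_ket_bra: "trace (ket_bra \<psi>) = cinner \<psi> \<psi>"
  by (simp add: trace_def ket_bra_def cinner_def mult.commute)

lemma range_ket_bra:
  assumes "cinner \<psi> \<psi> = 1"
  shows "range ((*v) (ket_bra \<psi>)) = {c *s \<psi> | c. True}"
proof (intro set_eqI iffI)
  fix x assume "x \<in> {c *s \<psi> | c. True}"
  then obtain c where "x = c *s \<psi>" by auto
  then have "ket_bra \<psi> *v x = x"
    using assms by (simp add: ket_bra_mult_vec cinner_scale_right)
  then show "x \<in> range ((*v) (ket_bra \<psi>))" by (metis rangeI)
qed (auto simp: ket_bra_mult_vec)

lemma ket_proj_eq_ket_bra:
  assumes "cinner \<psi> \<psi> = 1"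
  shows "ket_proj \<psi> = ket_bra \<psi>"
  using proj_onto_range[OF ket_bra_idem[OF assms] adj_ket_bra] range_ket_bra[OF assms]
  by (simp add: ket_proj_def)

lemma pure_state_iff: "pure_state \<rho> \<longleftrightarrow> (\<exists>\<psi>. cinner \<psi> \<psi> = 1 \<and> \<rho> = ket_bra \<psi>)"
  by (metis pure_state_def ket_proj_eq_ket_bra)

lemma eigenvalue_1_ket_bra:
  assumes "cinner \<psi> \<psi> = 1"
  shows "1 \<in> eigenvalues (ket_bra \<psi>)"
proof -
  have "\<psi> \<noteq> 0" using assms by (auto simp: cinner_def)
  moreover have "ket_bra \<psi> *v \<psi> = 1 *s \<psi>" using assms by (simp add: ket_bra_mult_vec)
  ultimately show ?thesis unfolding eigenvalues_def by blast
qed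

lemma trace_mult_ket_bra_neq_1:
  assumes "cinner \<psi> \<psi> = 1" "cinner \<phi> \<phi> = 1" "ket_bra \<psi> \<noteq> ket_bra \<phi>"
  shows "trace (ket_bra \<phi> ** ket_bra \<psi>) \<noteq> 1"
  using proj_eq_if_trace_mult_eq_1 assms
  by (metis ket_bra_idem adj_ket_bra trace_ket_bra)

lemma AE_eq_if_integral_norm_diff_eq_0:
  fixes g :: "'a \<Rightarrow> 'b::{banach, second_countable_topology}"
  assumes "integrable N (\<lambda>x. g x - c)" and "(\<integral>x. norm (g x - c) \<partial>N) = 0"
  shows "AE x in N. g x = c"
proof -
  have "emeasure N {x\<in>space N. g x - c \<noteq> 0} = 0"
    using assms integral_norm_eq_0_iff by blast
  moreover have "{x\<in>space N. g x - c \<noteq> 0} \<in> sets N"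
    using borel_measurable_integrable[OF assms(1)] by measurable
  ultimately show ?thesis by (auto intro: AE_I')
qed

lemma SUP_measure_diff_eq_1:
  assumes "prob_space M1" "prob_space M2" "D \<in> S" "measure M1 D = 1" "measure M2 D = 0"
  shows "(SUP E\<in>S. \<bar>measure M1 E - measure M2 E\<bar>) = 1"
proof (rule cSup_eq_maximum)
  show "1 \<in> (\<lambda>E. \<bar>measure M1 E - measure M2 E\<bar>) ` S"
    using assms by force
next
  fix x assume "x \<in> (\<lambda>E. \<bar>measure M1 E - measure M2 E\<bar>) ` S"
  then obtain E where "x = \<bar>measure M1 E - measure M2 E\<bar>" by blast
  moreover have "measure M1 E \<le> 1" "measure M2 E \<le> 1"
    using prob_space.prob_le_1 assms(1,2) by auto
  moreover have "0 \<le> measure M1 E" "0 \<le> measure M2 E" by simp_all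
  ultimately show "x \<le> 1" by linarith
qed

lemma ontic_model_prob_space:
  assumes "ontic_model L Ps Ms Ts rho A U p mu gamma" "P \<in> Ps"
  shows "prob_space (mu P)" "sets (mu P) = sets L"
  using assms unfolding ontic_model_def by blast+

lemma ontic_model_response_measurable:
  assumes "ontic_model L Ps Ms Ts rho A U p mu gamma" "M \<in> Ms" "a \<in> eigenvalues (A M)"
  shows "p M a \<in> borel_measurable L"
  using assms unfolding ontic_model_def by blast

lemma ontic_model_response_bounded:
  assumes "ontic_model L Ps Ms Ts rho A U p mu gamma"
    and "M \<in> Ms" "a \<in> eigenvalues (A M)" "l \<in> space L"
  shows "0 \<le> p M a l \<and> p M a l \<le> 1"
proof -
  have nonneg: "\<forall>b\<in>eigenvalues (A M). 0 \<le> p M b l"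
    and sum: "(\<Sum>b\<in>eigenvalues (A M). p M b l) = 1"
    using assms unfolding ontic_model_def by blast+
  then have "finite (eigenvalues (A M))"
    by (metis sum.infinite zero_neq_one)
  then have "p M a l \<le> (\<Sum>b\<in>eigenvalues (A M). p M b l)"
    by (rule member_le_sum[OF assms(3), rotated]) (use nonneg in blast)
  then show ?thesis using nonneg sum assms(3) by simp
qed

lemma trivial_wrt_AE_response:
  assumes om: "ontic_model L Ps Ms Ts rho A U p mu gamma"
    and "trivial_wrt Ms' Ps' rho A p mu" "Ms' \<subseteq> Ms" "Ps' \<subseteq> Ps"
    and "P \<in> Ps'" "M \<in> Ms'" "a \<in> eigenvalues (A M)"
  shows "AE l in mu P. complex_of_real (p M a l) = trace (rho P ** eigproj (A M) a)"
proof (rule AE_eq_if_integral_norm_diff_eq_0)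
  have P: "prob_space (mu P)" "sets (mu P) = sets L" and M: "M \<in> Ms"
    using ontic_model_prob_space[OF om] assms(3-6) by auto
  interpret prob_space "mu P" by (fact P(1))
  have "p M a \<in> borel_measurable (mu P)"
    unfolding measurable_cong_sets[OF P(2) refl]
    by (rule ontic_model_response_measurable[OF om M assms(7)])
  moreover have "AE l in mu P. norm (complex_of_real (p M a l)) \<le> 1"
    using ontic_model_response_bounded[OF om M assms(7)] sets_eq_imp_space_eq[OF P(2)]
    by (intro AE_I2) auto
  ultimately have "integrable (mu P) (\<lambda>l. complex_of_real (p M a l))"
    by (intro integrable_const_bound[where B=1]) auto
  then show "integrable (mu P) (\<lambda>l. complex_of_real (p M a l) - trace (rho P ** eigproj (A M) a))"
    by (intro Bochner_Integration.integrable_diff) auto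
  show "(\<integral>l. norm (complex_of_real (p M a l) - trace (rho P ** eigproj (A M) a)) \<partial>mu P) = 0"
    using assms(2,5,6,7) unfolding trivial_wrt_def by blast
qed

theorem proposition1:
  fixes L :: "'l measure" and Ps :: "'p set" and Ms :: "'m set" and Ts :: "'t set"
    and rho :: "'p \<Rightarrow> ('n::finite) cmat" and A :: "'m \<Rightarrow> 'n cmat" and U :: "'t \<Rightarrow> 'n cmat"
    and p :: "'m \<Rightarrow> complex \<Rightarrow> 'l \<Rightarrow> real" and mu :: "'p \<Rightarrow> 'l measure"
    and gamma :: "'t \<Rightarrow> 'l \<Rightarrow> 'l measure"
  assumes "quantum_system Ps Ms Ts rho A U"
    and "{\<rho>. density_op \<rho>} \<subseteq> rho ` Ps"
    and "{X. self_adjoint X} \<subseteq> A ` Ms"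
    and "ontic_model L Ps Ms Ts rho A U p mu gamma"
    and "psi_complete Ps Ms rho A p mu"
  shows "psi_ontic L Ps rho mu"
  unfolding psi_ontic_def
proof (intro ballI impI)
  fix P1 P2 assume P: "P1 \<in> Ps" "P2 \<in> Ps"
    and "pure_state (rho P1) \<and> pure_state (rho P2) \<and> rho P1 \<noteq> rho P2"
  then obtain \<psi>1 \<psi>2 where \<psi>: "cinner \<psi>1 \<psi>1 = 1" "cinner \<psi>2 \<psi>2 = 1"
    and rho: "rho P1 = ket_bra \<psi>1" "rho P2 = ket_bra \<psi>2" "ket_bra \<psi>1 \<noteq> ket_bra \<psi>2"
    unfolding pure_state_iff by metis
  have "ket_bra \<psi>1 \<in> A ` Ms"
    using assms(3) adj_ket_bra unfolding self_adjoint_def by auto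
  then obtain M where M: "M \<in> Ms" "A M = ket_bra \<psi>1" by force
  have eig: "1 \<in> eigenvalues (A M)" "eigproj (A M) 1 = ket_bra \<psi>1"
    using M(2) eigenvalue_1_ket_bra eigproj_1_proj ket_bra_idem adj_ket_bra \<psi>(1) by auto
  have AE: "AE l in mu P. complex_of_real (p M 1 l) = trace (rho P ** ket_bra \<psi>1)"
    if "P \<in> Ps" for P
    using trivial_wrt_AE_response[OF assms(4) _ subset_refl subset_refl that M(1) eig(1)]
      assms(5) eig(2) unfolding psi_complete_def by simp
  define D where "D = {l\<in>space L. p M 1 l = 1}"
  have D: "D \<in> sets (mu P)" if "P \<in> Ps" for P
    using ontic_model_response_measurable[OF assms(4) M(1) eig(1)]
      ontic_model_prob_space(2)[OF assms(4) that]
    unfolding D_def by simp measurable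
  have "AE l in mu P1. l \<in> D"
    using AE[OF P(1)] AE_space
    by eventually_elim (simp add: D_def rho(1) ket_bra_idem trace_ket_bra \<psi>(1)
        sets_eq_imp_space_eq[OF ontic_model_prob_space(2)[OF assms(4) P(1)]])
  then have "measure (mu P1) D = 1"
    using prob_space.AE_in_set_eq_1[OF ontic_model_prob_space(1)[OF assms(4) P(1)] D[OF P(1)]]
    by simp
  moreover have "AE l in mu P2. l \<notin> D"
    using AE[OF P(2)]
    by eventually_elim (use trace_mult_ket_bra_neq_1[OF \<psi> rho(3)] in \<open>auto simp: D_def rho(2)\<close>)
  then have "measure (mu P2) D = 0"
    using prob_space.prob_eq_0[OF ontic_model_prob_space(1)[OF assms(4) P(2)] D[OF P(2)]]
    by simp
  ultimately show "(SUP D\<in>sets L. \<bar>measure (mu P1) D - measure (mu P2) D\<bar>) = 1"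
    using SUP_measure_diff_eq_1 ontic_model_prob_space(1)[OF assms(4)] P D[OF P(1)]
      ontic_model_prob_space(2)[OF assms(4) P(1)] by metis
qed

end
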